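(* Let $\Theta$ be a parameter space. For a set function $C:[0,1]\to2^{\Theta}$, $C\in\mathrm{ECI}(\Theta)$ if and only if $C$ is nonincreasing and continuous from above (i.e. $C(\alpha)=\bigcup_{\beta>\alpha}C(\beta)$ for every $\alpha\in[0,1)$).
   Context: The underlying probability space is assumed to carry a random variable $U$ that is standard uniform under every parameter $\theta\in\Theta$. An e-value family for $\Theta$ is $(E(\theta))_{\theta\in\Theta}$ with $E(\theta)\ge0$ and $\mathbb{E}_\theta[E(\theta)]\le1$ for every $\theta$. $\mathrm{ECI}(\Theta)$ is the set of all $C:[0,1]\to2^\Theta$ that are a possible realization of an e-CI, i.e. for which there exists an e-value family $E$ and a possible realization of it (under some true parameter $\theta^*\in\Theta$) such that $C(\alpha)=\{\theta\in\Theta:E(\theta)<1/\alpha\}$ for all $\alpha\in[0,1)$, with the convention $1/0=\infty$. *)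

theory Defs
  imports "HOL-Probability.Probability"
begin

text \<open>The parameter space Theta is the (nonempty) type 'p.  The statistical model is a
  family of probability measures M theta on a common measurable space (sample space 'o).
  e-values are extended nonnegative reals (ennreal), so that 1/0 = infinity is handled
  via inverse 0 = top.\<close>

definition model_with_uniform :: "('p \<Rightarrow> 'o measure) \<Rightarrow> ('o \<Rightarrow> real) \<Rightarrow> bool" where
  "model_with_uniform M U \<longleftrightarrow>
     (\<forall>\<theta>. prob_space (M \<theta>)) \<and>
     (\<forall>\<theta> \<theta>'. sets (M \<theta>) = sets (M \<theta>') \<and> space (M \<theta>) = space (M \<theta>')) \<and>
     (\<forall>\<theta>. U \<in> borel_measurable (M \<theta>) \<and>
           distr (M \<theta>) lborel U = uniform_measure lborel {0..1})"

definition e_value_family :: "('p \<Rightarrow> 'o measure) \<Rightarrow> ('p \<Rightarrow> 'o \<Rightarrow> ennreal) \<Rightarrow> bool" where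
  "e_value_family M E \<longleftrightarrow>
     (\<forall>\<theta>. E \<theta> \<in> borel_measurable (M \<theta>) \<and> (\<integral>\<^sup>+ \<omega>. E \<theta> \<omega> \<partial>M \<theta>) \<le> 1)"

text \<open>Set functions C : [0,1] -> 2^Theta are represented as real => 'p set; only the
  values on [0,1] matter.\<close>

definition ECI :: "('p \<Rightarrow> 'o measure) \<Rightarrow> (real \<Rightarrow> 'p set) set" where
  "ECI M = {C. \<exists>E \<theta>s \<omega>. e_value_family M E \<and> \<omega> \<in> space (M \<theta>s) \<and>
      (\<forall>\<alpha>\<in>{0..1}. C \<alpha> = {\<theta>. E \<theta> \<omega> < inverse (ennreal \<alpha>)})}"

end

theory Submission
  imports Defs
begin

text \<open>A set function C is an e-CI realization iff C(\<alpha>) = {\<theta>. e \<theta> < 1/\<alpha>} on [0,1] for some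
  e : \<Theta> \<Rightarrow> [0,\<infinity>]: an e-value family with arbitrarily prescribed values at a sample point \<omega>
  exists because one can put E(\<theta>) = e \<theta> on the event {U = U \<omega>}, which is null since U has no
  atoms, and E(\<theta>) = 0 elsewhere.  Such level sets are nonincreasing in \<alpha>, and continuous from
  above because \<alpha> \<mapsto> 1/\<alpha> is continuous.  Conversely, a nonincreasing, continuous-from-above C
  is the level-set family of e \<theta> = sup {1/\<alpha> | \<theta> \<notin> C(\<alpha>)}.\<close>

lemma ennreal_inverse_antimono: "(a::ennreal) \<le> b \<Longrightarrow> inverse b \<le> inverse a"
  by (simp add: less_eq_ennreal.rep_eq inverse_ennreal.rep_eq ereal_inverse_antimono)

lemma ennreal_inverse_strict_antimono: "(a::ennreal) < b \<Longrightarrow> inverse b < inverse a"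
  by (simp add: less_ennreal.rep_eq inverse_ennreal.rep_eq ereal_inverse_antimono_strict)

lemma isCont_inverse_ennreal: "isCont (\<lambda>x::real. inverse (ennreal x)) a"
proof -
  have "continuous_on UNIV (\<lambda>x::real. inverse (ennreal x))"
    by (intro continuous_on_inverse_ennreal continuous_on_ennreal continuous_on_id)
  then show ?thesis
    by (simp add: continuous_on_eq_continuous_at)
qed

definition antimono_cont_from_above :: "(real \<Rightarrow> 'p set) \<Rightarrow> bool" where
  "antimono_cont_from_above C \<longleftrightarrow>
     (\<forall>\<alpha> \<beta>. 0 \<le> \<alpha> \<longrightarrow> \<alpha> \<le> \<beta> \<longrightarrow> \<beta> \<le> 1 \<longrightarrow> C \<beta> \<subseteq> C \<alpha>) \<and>
     (\<forall>\<alpha>\<in>{0..<1}. C \<alpha> = (\<Union>\<beta>\<in>{\<alpha><..1}. C \<beta>))"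

lemma antimono_cont_from_aboveD:
  assumes "antimono_cont_from_above C"
  shows antimono_cont_from_above_antimono: "0 \<le> \<alpha> \<Longrightarrow> \<alpha> \<le> \<beta> \<Longrightarrow> \<beta> \<le> 1 \<Longrightarrow> C \<beta> \<subseteq> C \<alpha>"
    and antimono_cont_from_above_cont:
      "0 \<le> \<alpha> \<Longrightarrow> \<alpha> < 1 \<Longrightarrow> \<theta> \<in> C \<alpha> \<Longrightarrow> \<exists>\<beta>. \<alpha> < \<beta> \<and> \<beta> \<le> 1 \<and> \<theta> \<in> C \<beta>"
  using assms unfolding antimono_cont_from_above_def by auto

lemma antimono_cont_from_above_level_sets:
  fixes e :: "'p \<Rightarrow> ennreal"
  assumes "\<forall>\<alpha>\<in>{0..1}. C \<alpha> = {\<theta>. e \<theta> < inverse (ennreal \<alpha>)}"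
  shows "antimono_cont_from_above C"
proof -
  have C: "C \<alpha> = {\<theta>. e \<theta> < inverse (ennreal \<alpha>)}" if "0 \<le> \<alpha>" "\<alpha> \<le> 1" for \<alpha>
    using assms that by auto
  have antimono: "C \<beta> \<subseteq> C \<alpha>" if "0 \<le> \<alpha>" "\<alpha> \<le> \<beta>" "\<beta> \<le> 1" for \<alpha> \<beta>
  proof -
    have "inverse (ennreal \<beta>) \<le> inverse (ennreal \<alpha>)"
      using that by (intro ennreal_inverse_antimono ennreal_leI)
    then show ?thesis
      using that C[of \<alpha>] C[of \<beta>] by auto
  qed
  have cont: "C \<alpha> = (\<Union>\<beta>\<in>{\<alpha><..1}. C \<beta>)" if \<alpha>: "0 \<le> \<alpha>" "\<alpha> < 1" for \<alpha>
  proof (rule subset_antisym)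
    show "C \<alpha> \<subseteq> (\<Union>\<beta>\<in>{\<alpha><..1}. C \<beta>)"
    proof
      fix \<theta> assume "\<theta> \<in> C \<alpha>"
      then have "e \<theta> < inverse (ennreal \<alpha>)"
        using C \<alpha> by auto
      moreover have "((\<lambda>\<beta>. inverse (ennreal \<beta>)) \<longlongrightarrow> inverse (ennreal \<alpha>)) (at_right \<alpha>)"
        using isCont_inverse_ennreal[of \<alpha>] unfolding isCont_def by (rule tendsto_mono[OF at_le, rotated]) simp
      ultimately have "\<forall>\<^sub>F \<beta> in at_right \<alpha>. e \<theta> < inverse (ennreal \<beta>)"
        by (rule order_tendstoD(1)[rotated])
      moreover have "\<forall>\<^sub>F \<beta> in at_right \<alpha>. \<beta> \<le> 1"
        using \<alpha> by (auto simp: eventually_at_right_field intro!: exI[of _ 1])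
      ultimately have "\<forall>\<^sub>F \<beta> in at_right \<alpha>. \<alpha> < \<beta> \<and> \<beta> \<le> 1 \<and> e \<theta> < inverse (ennreal \<beta>)"
        using eventually_at_right_less by (intro eventually_conj)
      then obtain \<beta> where "\<alpha> < \<beta>" "\<beta> \<le> 1" "e \<theta> < inverse (ennreal \<beta>)"
        using eventually_happens'[OF trivial_limit_at_right_real] by blast
      then show "\<theta> \<in> (\<Union>\<beta>\<in>{\<alpha><..1}. C \<beta>)"
        using C \<alpha> by auto
    qed
    show "(\<Union>\<beta>\<in>{\<alpha><..1}. C \<beta>) \<subseteq> C \<alpha>"
      using \<alpha> by (intro UN_least antimono) auto
  qed
  show ?thesis
    unfolding antimono_cont_from_above_def using antimono cont by auto
qed

definition least_evalue :: "(real \<Rightarrow> 'p set) \<Rightarrow> 'p \<Rightarrow> ennreal" where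
  "least_evalue C \<theta> = (SUP \<alpha>\<in>{\<alpha>\<in>{0..1}. \<theta> \<notin> C \<alpha>}. inverse (ennreal \<alpha>))"

lemma least_evalue_less_if_mem:
  assumes C: "antimono_cont_from_above C" and \<alpha>: "0 \<le> \<alpha>" "\<alpha> \<le> 1" and "\<theta> \<in> C \<alpha>"
  shows "least_evalue C \<theta> < inverse (ennreal \<alpha>)"
proof (cases "\<alpha> = 1")
  case True
  with antimono_cont_from_above_antimono[OF C] \<open>\<theta> \<in> C \<alpha>\<close>
  have no_rejection: "{\<alpha>\<in>{0..1}. \<theta> \<notin> C \<alpha>} = {}"
    by auto
  show ?thesis
    unfolding least_evalue_def no_rejection using True by (simp add: bot_ennreal)
next
  case False
  with antimono_cont_from_above_cont[OF C] \<alpha> \<open>\<theta> \<in> C \<alpha>\<close>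
  obtain \<beta> where \<beta>: "\<alpha> < \<beta>" "\<beta> \<le> 1" "\<theta> \<in> C \<beta>"
    by fastforce
  have "least_evalue C \<theta> \<le> inverse (ennreal \<beta>)"
    unfolding least_evalue_def
  proof (rule SUP_least)
    fix \<gamma> assume \<gamma>: "\<gamma> \<in> {\<alpha>\<in>{0..1}. \<theta> \<notin> C \<alpha>}"
    have "\<beta> \<le> \<gamma>"
    proof (rule ccontr)
      assume "\<not> \<beta> \<le> \<gamma>"
      then have "C \<beta> \<subseteq> C \<gamma>"
        using \<gamma> \<beta> by (intro antimono_cont_from_above_antimono[OF C]) auto
      with \<gamma> \<beta> show False
        by auto
    qed
    then show "inverse (ennreal \<gamma>) \<le> inverse (ennreal \<beta>)"
      by (intro ennreal_inverse_antimono ennreal_leI)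
  qed
  also have "\<dots> < inverse (ennreal \<alpha>)"
    using \<alpha> \<beta> by (intro ennreal_inverse_strict_antimono) (simp add: ennreal_lessI)
  finally show ?thesis .
qed

lemma least_evalue_level_sets:
  assumes "antimono_cont_from_above C" and "\<alpha> \<in> {0..1}"
  shows "C \<alpha> = {\<theta>. least_evalue C \<theta> < inverse (ennreal \<alpha>)}"
proof -
  have "inverse (ennreal \<alpha>) \<le> least_evalue C \<theta>" if "\<theta> \<notin> C \<alpha>" for \<theta>
    unfolding least_evalue_def using assms(2) that by (auto intro: SUP_upper)
  with least_evalue_less_if_mem[OF assms(1)] assms(2) show ?thesis
    by (auto simp: not_le[symmetric])
qed

lemma level_sets_iff_antimono_cont_from_above:
  "(\<exists>e::'p \<Rightarrow> ennreal. \<forall>\<alpha>\<in>{0..1}. C \<alpha> = {\<theta>. e \<theta> < inverse (ennreal \<alpha>)})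
     \<longleftrightarrow> antimono_cont_from_above C"
proof
  assume "\<exists>e::'p \<Rightarrow> ennreal. \<forall>\<alpha>\<in>{0..1}. C \<alpha> = {\<theta>. e \<theta> < inverse (ennreal \<alpha>)}"
  then show "antimono_cont_from_above C"
    using antimono_cont_from_above_level_sets by blast
next
  assume "antimono_cont_from_above C"
  then show "\<exists>e::'p \<Rightarrow> ennreal. \<forall>\<alpha>\<in>{0..1}. C \<alpha> = {\<theta>. e \<theta> < inverse (ennreal \<alpha>)}"
    using least_evalue_level_sets by blast
qed

lemma model_with_uniform_level_null:
  assumes "model_with_uniform M U"
  shows "U -` {u} \<inter> space (M \<theta>) \<in> null_sets (M \<theta>)"
proof -
  have U: "U \<in> borel_measurable (M \<theta>)" "distr (M \<theta>) lborel U = uniform_measure lborel {0..1}"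
    using assms unfolding model_with_uniform_def by auto
  have "emeasure (M \<theta>) (U -` {u} \<inter> space (M \<theta>)) = emeasure (distr (M \<theta>) lborel U) {u}"
    using U(1) by (simp add: emeasure_distr)
  also have "\<dots> = emeasure lborel ({0..1} \<inter> {u}) / emeasure lborel {0..1::real}"
    unfolding U(2) by simp
  also have "emeasure lborel ({0..1} \<inter> {u}) = 0"
    by (rule emeasure_eq_0[of "{u}"]) auto
  finally show ?thesis
    by (intro null_setsI) (simp_all add: measurable_sets[OF U(1)])
qed

lemma e_value_family_indicator_null:
  assumes "\<And>\<theta>. A \<theta> \<in> null_sets (M \<theta>)"
  shows "e_value_family M (\<lambda>\<theta> \<omega>. e \<theta> * indicator (A \<theta>) \<omega>)"
  unfolding e_value_family_def
proof (intro allI conjI)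
  fix \<theta>
  from assms[of \<theta>] have A: "A \<theta> \<in> sets (M \<theta>)" "emeasure (M \<theta>) (A \<theta>) = 0"
    by auto
  then show "(\<lambda>\<omega>. e \<theta> * indicator (A \<theta>) \<omega>) \<in> borel_measurable (M \<theta>)"
    by measurable
  show "(\<integral>\<^sup>+ \<omega>. e \<theta> * indicator (A \<theta>) \<omega> \<partial>M \<theta>) \<le> 1"
    using A by (simp add: nn_integral_cmult_indicator)
qed

lemma ECI_iff_level_sets:
  assumes "model_with_uniform M U"
  shows "C \<in> ECI M \<longleftrightarrow> (\<exists>e. \<forall>\<alpha>\<in>{0..1}. C \<alpha> = {\<theta>. e \<theta> < inverse (ennreal \<alpha>)})"
proof
  assume "C \<in> ECI M"
  then obtain E \<theta>\<^sub>0 \<omega> where "\<forall>\<alpha>\<in>{0..1}. C \<alpha> = {\<theta>. E \<theta> \<omega> < inverse (ennreal \<alpha>)}"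
    unfolding ECI_def by blast
  then show "\<exists>e. \<forall>\<alpha>\<in>{0..1}. C \<alpha> = {\<theta>. e \<theta> < inverse (ennreal \<alpha>)}"
    by (intro exI[of _ "\<lambda>\<theta>. E \<theta> \<omega>"])
next
  assume "\<exists>e. \<forall>\<alpha>\<in>{0..1}. C \<alpha> = {\<theta>. e \<theta> < inverse (ennreal \<alpha>)}"
  then obtain e where e: "\<forall>\<alpha>\<in>{0..1}. C \<alpha> = {\<theta>. e \<theta> < inverse (ennreal \<alpha>)}" ..
  have space: "space (M \<theta>) = space (M \<theta>')" and "prob_space (M \<theta>)" for \<theta> \<theta>'
    using assms unfolding model_with_uniform_def by auto
  then obtain \<omega> where \<omega>: "\<omega> \<in> space (M undefined)"
    using prob_space.not_empty by blast
  define E where "E \<theta> \<omega>' = e \<theta> * indicator (U -` {U \<omega>} \<inter> space (M \<theta>)) \<omega>'" for \<theta> \<omega>'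
  have "e_value_family M E"
    unfolding E_def by (intro e_value_family_indicator_null model_with_uniform_level_null assms)
  moreover have "E \<theta> \<omega> = e \<theta>" for \<theta>
    using \<omega> space[of \<theta> undefined] by (simp add: E_def)
  ultimately show "C \<in> ECI M"
    unfolding ECI_def using \<omega> e by (intro CollectI exI[of _ E] exI[of _ undefined] exI[of _ \<omega>]) simp
qed

theorem lemma1:
  fixes M :: "'p \<Rightarrow> 'o measure" and U :: "'o \<Rightarrow> real" and C :: "real \<Rightarrow> 'p set"
  assumes "model_with_uniform M U"
  shows "C \<in> ECI M \<longleftrightarrow>
    ((\<forall>\<alpha> \<beta>. 0 \<le> \<alpha> \<longrightarrow> \<alpha> \<le> \<beta> \<longrightarrow> \<beta> \<le> 1 \<longrightarrow> C \<beta> \<subseteq> C \<alpha>) \<and>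
     (\<forall>\<alpha>\<in>{0..<1}. C \<alpha> = (\<Union>\<beta>\<in>{\<alpha><..1}. C \<beta>)))"
  by (simp only: ECI_iff_level_sets[OF assms] level_sets_iff_antimono_cont_from_above
      antimono_cont_from_above_def)

end
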